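(* Let $\Gamma$ be a distance-regular graph with classical parameters $(D,b,\alpha,\beta)$ such that $b\ge2$ and $D\ge3$, which is geometric with respect to a set $\mathcal C$ of Delsarte cliques. Then: for each $j\in\{0,1,\dots,D-1\}$, each $C\in\mathcal C$ and each vertex $x$ at distance $j$ from $C$, the number of vertices of $C$ at distance $j$ from $x$ is $\phi_j=1+\alpha[j]$; and for each $j\in\{1,\dots,D\}$ and vertices $x,y$ at distance $j$, the number of cliques in $\mathcal C$ containing $x$ and at distance $j-1$ from $y$ is $\tau_j=[j]$.
   Context: Distance-regular graph with intersection numbers $b_i,c_i$, valency $k=b_0$. For integer $b\ne1$, $[j]=\frac{b^j-1}{b-1}$. Classical parameters $(D,b,\alpha,\beta)$: diameter $D$, $b_i=([D]-[i])(\beta-\alpha[i])$, $c_i=[i](1+\alpha[i-1])$. A Delsarte clique is a clique with $1+\frac{k}{-\theta_{\min}}$ vertices, $\theta_{\min}$ the smallest adjacency eigenvalue; geometric with respect to $\mathcal C$ means every edge lies in exactly one member of $\mathcal C$. Distance from a vertex to a clique $C$: $\min_{y\in C}d(x,y)$. *)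

theory Defs
  imports Complex_Main
begin

definition simple_graph :: "'a set \<Rightarrow> ('a \<Rightarrow> 'a \<Rightarrow> bool) \<Rightarrow> bool" where
  "simple_graph V E \<longleftrightarrow> finite V \<and> V \<noteq> {} \<and>
     (\<forall>x y. E x y \<longrightarrow> x \<in> V \<and> y \<in> V \<and> E y x \<and> x \<noteq> y)"

fun walk :: "'a set \<Rightarrow> ('a \<Rightarrow> 'a \<Rightarrow> bool) \<Rightarrow> nat \<Rightarrow> 'a \<Rightarrow> 'a \<Rightarrow> bool" where
  "walk V E 0 x y = (x = y)"
| "walk V E (Suc n) x y = (\<exists>z\<in>V. E x z \<and> walk V E n z y)"

definition connected_graph :: "'a set \<Rightarrow> ('a \<Rightarrow> 'a \<Rightarrow> bool) \<Rightarrow> bool" where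
  "connected_graph V E \<longleftrightarrow> (\<forall>x\<in>V. \<forall>y\<in>V. \<exists>n. walk V E n x y)"

definition gdist :: "'a set \<Rightarrow> ('a \<Rightarrow> 'a \<Rightarrow> bool) \<Rightarrow> 'a \<Rightarrow> 'a \<Rightarrow> nat" where
  "gdist V E x y = (LEAST n. walk V E n x y)"

definition diameter :: "'a set \<Rightarrow> ('a \<Rightarrow> 'a \<Rightarrow> bool) \<Rightarrow> nat" where
  "diameter V E = Max {gdist V E x y | x y. x \<in> V \<and> y \<in> V}"

definition set_dist :: "'a set \<Rightarrow> ('a \<Rightarrow> 'a \<Rightarrow> bool) \<Rightarrow> 'a \<Rightarrow> 'a set \<Rightarrow> nat" where
  "set_dist V E x C = Min (gdist V E x ` C)"

definition cnum :: "'a set \<Rightarrow> ('a \<Rightarrow> 'a \<Rightarrow> bool) \<Rightarrow> 'a \<Rightarrow> 'a \<Rightarrow> nat" where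
  "cnum V E x y = card {z \<in> V. E y z \<and> gdist V E x z + 1 = gdist V E x y}"

definition bnum :: "'a set \<Rightarrow> ('a \<Rightarrow> 'a \<Rightarrow> bool) \<Rightarrow> 'a \<Rightarrow> 'a \<Rightarrow> nat" where
  "bnum V E x y = card {z \<in> V. E y z \<and> gdist V E x z = gdist V E x y + 1}"

definition distance_regular :: "'a set \<Rightarrow> ('a \<Rightarrow> 'a \<Rightarrow> bool) \<Rightarrow> bool" where
  "distance_regular V E \<longleftrightarrow> simple_graph V E \<and> connected_graph V E \<and>
     (\<exists>b c :: nat \<Rightarrow> nat. \<forall>x\<in>V. \<forall>y\<in>V.
        bnum V E x y = b (gdist V E x y) \<and> cnum V E x y = c (gdist V E x y))"

text \<open>Valency (degree of a vertex; constant for distance-regular graphs).\<close>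
definition valency :: "'a set \<Rightarrow> ('a \<Rightarrow> 'a \<Rightarrow> bool) \<Rightarrow> nat" where
  "valency V E = card {y \<in> V. E (SOME x. x \<in> V) y}"

definition qbr :: "int \<Rightarrow> nat \<Rightarrow> real" where
  "qbr b j = (real_of_int b ^ j - 1) / (real_of_int b - 1)"

text \<open>Classical parameters (D,b,alpha,beta): b_i = ([D]-[i])(beta - alpha[i]),
  c_i = [i](1 + alpha[i-1]) for 0 <= i <= D (c_0 = 0 since [0] = 0).\<close>
definition classical_parameters ::
  "'a set \<Rightarrow> ('a \<Rightarrow> 'a \<Rightarrow> bool) \<Rightarrow> nat \<Rightarrow> int \<Rightarrow> real \<Rightarrow> real \<Rightarrow> bool" where
  "classical_parameters V E D b \<alpha> \<beta> \<longleftrightarrow> distance_regular V E \<and> b \<noteq> 1 \<and>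
     diameter V E = D \<and>
     (\<forall>x\<in>V. \<forall>y\<in>V. gdist V E x y \<le> D \<longrightarrow>
        (let i = gdist V E x y in
          real (bnum V E x y) = (qbr b D - qbr b i) * (\<beta> - \<alpha> * qbr b i) \<and>
          real (cnum V E x y) = qbr b i * (1 + \<alpha> * qbr b (i - 1))))"

definition adj_eigenvalue :: "'a set \<Rightarrow> ('a \<Rightarrow> 'a \<Rightarrow> bool) \<Rightarrow> real \<Rightarrow> bool" where
  "adj_eigenvalue V E \<theta> \<longleftrightarrow> (\<exists>f :: 'a \<Rightarrow> real. (\<exists>x\<in>V. f x \<noteq> 0) \<and>
      (\<forall>x\<in>V. (\<Sum>y\<in>{y \<in> V. E x y}. f y) = \<theta> * f x))"

definition min_eigenvalue :: "'a set \<Rightarrow> ('a \<Rightarrow> 'a \<Rightarrow> bool) \<Rightarrow> real" where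
  "min_eigenvalue V E = Min {\<theta>. adj_eigenvalue V E \<theta>}"

definition is_clique :: "'a set \<Rightarrow> ('a \<Rightarrow> 'a \<Rightarrow> bool) \<Rightarrow> 'a set \<Rightarrow> bool" where
  "is_clique V E C \<longleftrightarrow> C \<subseteq> V \<and> (\<forall>x\<in>C. \<forall>y\<in>C. x \<noteq> y \<longrightarrow> E x y)"

definition delsarte_clique :: "'a set \<Rightarrow> ('a \<Rightarrow> 'a \<Rightarrow> bool) \<Rightarrow> 'a set \<Rightarrow> bool" where
  "delsarte_clique V E C \<longleftrightarrow> is_clique V E C \<and>
     real (card C) = 1 + real (valency V E) / (- min_eigenvalue V E)"

definition geometric_wrt :: "'a set \<Rightarrow> ('a \<Rightarrow> 'a \<Rightarrow> bool) \<Rightarrow> 'a set set \<Rightarrow> bool" where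
  "geometric_wrt V E \<C> \<longleftrightarrow> (\<forall>C\<in>\<C>. delsarte_clique V E C) \<and>
     (\<forall>x y. E x y \<longrightarrow> (\<exists>!C. C \<in> \<C> \<and> x \<in> C \<and> y \<in> C))"

end

theory Submission
  imports Defs "HOL-Computational_Algebra.Polynomial"
begin

(* With classical parameters, theta = -[D] has the standard sequence
   u_j = rho_0 ... rho_(j-1), rho_i = -(1 + alpha [i]) / (beta - alpha [i]) < 0.
   A standard sequence of alternating sign forces theta to be the smallest
   eigenvalue: below it, the ratios of consecutive sphere polynomials stay below
   their values at theta, so the eigenvalue polynomial has no smaller root.
   Hence Delsarte cliques have 1 + beta vertices and every vertex lies on [D] of
   them. Summing (sum over C of u(d(x,y)))^2 over all cliques C gives
   sum_y u(d(x,y)) (([D] + A) u(d(x,-)))(y) = 0, so u(d(x,-)) sums to zero on every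
   clique. The vertices of C are at distance j or j + 1 from x, so this sum is
   n u_j + (1 + beta - n) u_(j+1), whence n = 1 + alpha [j]. Finally the c_j
   neighbours of x closer to y are partitioned by the cliques through x at distance
   j - 1 from y, each holding 1 + alpha [j-1] of them, so there are [j] such cliques. *)

section \<open>Distances in finite simple graphs\<close>

locale fin_simple_graph =
  fixes V :: "'a set" and E :: "'a \<Rightarrow> 'a \<Rightarrow> bool"
  assumes simple: "simple_graph V E"
begin

abbreviation neighbours :: "'a \<Rightarrow> 'a set" where
  "neighbours x \<equiv> {y \<in> V. E x y}"

lemma finite_V: "finite V" and V_nonempty: "V \<noteq> {}"
  using simple by (auto simp: simple_graph_def)

lemma adj_in_V: "E x y \<Longrightarrow> x \<in> V \<and> y \<in> V"
  and adj_sym: "E x y \<Longrightarrow> E y x"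
  and adj_irrefl: "E x y \<Longrightarrow> x \<noteq> y"
  using simple by (auto simp: simple_graph_def)

lemma sum_sum_neighbours_swap:
  "(\<Sum>y\<in>A. \<Sum>z\<in>neighbours y. f z) = (\<Sum>z\<in>V. f z * real (card (neighbours z \<inter> A)))"
  if "A \<subseteq> V" for f :: "'a \<Rightarrow> real"
proof -
  have "(\<Sum>y\<in>A. \<Sum>z\<in>neighbours y. f z) = (\<Sum>y\<in>A. \<Sum>z\<in>V. if E y z then f z else 0)"
    using finite_V by (simp add: sum.inter_filter)
  also have "\<dots> = (\<Sum>z\<in>V. \<Sum>y\<in>A. if E z y then f z else 0)"
    by (subst sum.swap) (auto intro!: sum.cong dest: adj_sym)
  also have "\<dots> = (\<Sum>z\<in>V. f z * real (card (neighbours z \<inter> A)))"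
  proof (rule sum.cong)
    fix z
    have "neighbours z \<inter> A = {y \<in> A. E z y}"
      using that by auto
    then show "(\<Sum>y\<in>A. if E z y then f z else 0) = f z * real (card (neighbours z \<inter> A))"
      using finite_subset[OF that finite_V] by (simp add: sum.If_cases Int_def)
  qed simp
  finally show ?thesis .
qed

end

locale connected_simple_graph = fin_simple_graph +
  assumes connected: "connected_graph V E"
begin

abbreviation d :: "'a \<Rightarrow> 'a \<Rightarrow> nat" where
  "d \<equiv> gdist V E"

lemma walk_append: "walk V E m x y \<Longrightarrow> walk V E n y z \<Longrightarrow> walk V E (m + n) x z"
  by (induction m arbitrary: x) auto

lemma walk_snoc: "walk V E n x y \<Longrightarrow> E y z \<Longrightarrow> walk V E (Suc n) x z"
  using walk_append[of n x y 1 z] adj_in_V by auto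

lemma walk_rev: "walk V E n x y \<Longrightarrow> walk V E n y x"
proof (induction n arbitrary: x)
  case (Suc n)
  then obtain z where "E x z" "walk V E n y z"
    by auto
  then show ?case
    using walk_snoc adj_sym by blast
qed simp

lemma walk_gdist: "x \<in> V \<Longrightarrow> y \<in> V \<Longrightarrow> walk V E (d x y) x y"
  using connected unfolding connected_graph_def gdist_def by (metis LeastI_ex)

lemma gdist_le_walk: "walk V E n x y \<Longrightarrow> d x y \<le> n"
  unfolding gdist_def by (rule Least_le)

lemma gdist_sym: "x \<in> V \<Longrightarrow> y \<in> V \<Longrightarrow> d x y = d y x"
  by (meson antisym gdist_le_walk walk_gdist walk_rev)

lemma gdist_self [simp]: "d x x = 0"
  using gdist_le_walk[of 0 x x] by simp

lemma gdist_eq_0_iff: "x \<in> V \<Longrightarrow> y \<in> V \<Longrightarrow> d x y = 0 \<longleftrightarrow> x = y"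
  using walk_gdist[of x y] by auto

lemma gdist_adj_le: "x \<in> V \<Longrightarrow> E y z \<Longrightarrow> d x z \<le> d x y + 1"
  using gdist_le_walk[OF walk_snoc[OF walk_gdist]] adj_in_V by simp

lemma gdist_adj: "E x y \<Longrightarrow> d x y = 1"
  using gdist_adj_le[of x x y] gdist_eq_0_iff[of x y] adj_in_V[of x y] adj_irrefl[of x y]
  by simp

lemma gdist_eq_1_iff: "x \<in> V \<Longrightarrow> y \<in> V \<Longrightarrow> d x y = 1 \<longleftrightarrow> E x y"
  using walk_gdist[of x y] gdist_adj by auto

lemma gdist_Suc_obtain:
  assumes "x \<in> V" "y \<in> V" "d x y = Suc n"
  obtains z where "E y z" "d x z = n"
proof -
  have "walk V E (Suc n) y x"
    using walk_rev[OF walk_gdist[OF assms(1,2)]] assms(3) by simp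
  then obtain z where z: "E y z" "walk V E n z x"
    by auto
  have "d x z \<le> n"
    using gdist_le_walk[OF walk_rev[OF z(2)]] .
  moreover have "d x y \<le> d x z + 1"
    using gdist_adj_le[OF assms(1) adj_sym[OF z(1)]] .
  ultimately show thesis
    using that z(1) assms(3) by simp
qed

lemma finite_gdists: "finite {d x y | x y. x \<in> V \<and> y \<in> V}"
proof -
  have "{d x y | x y. x \<in> V \<and> y \<in> V} = case_prod d ` (V \<times> V)"
    by auto
  then show ?thesis
    using finite_V by simp
qed

lemma gdist_le_diameter: "x \<in> V \<Longrightarrow> y \<in> V \<Longrightarrow> d x y \<le> diameter V E"
  unfolding diameter_def using finite_gdists by (blast intro: Max_ge)

lemma all_gdists_from_some_vertex:
  "\<exists>x\<in>V. \<forall>j \<le> diameter V E. \<exists>y\<in>V. d x y = j"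
proof -
  have "{d x y | x y. x \<in> V \<and> y \<in> V} \<noteq> {}"
    using V_nonempty by blast
  from Max_in[OF finite_gdists this] obtain x y where xy: "x \<in> V" "y \<in> V" "d x y = diameter V E"
    unfolding diameter_def by auto
  have reach: "\<exists>y'\<in>V. d x y' = diameter V E - n" if "n \<le> diameter V E" for n
    using that
  proof (induction n)
    case (Suc n)
    then obtain y' where y': "y' \<in> V" "d x y' = diameter V E - n"
      by auto
    moreover have "diameter V E - n = Suc (diameter V E - Suc n)"
      using Suc.prems by arith
    ultimately obtain z where "E y' z" "d x z = diameter V E - Suc n"
      using gdist_Suc_obtain[OF xy(1)] by metis
    then show ?case
      using adj_in_V by blast
  qed (use xy in auto)
  have "\<exists>y\<in>V. d x y = j" if "j \<le> diameter V E" for j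
    using reach[of "diameter V E - j"] that by simp
  then show ?thesis
    using xy(1) by blast
qed

lemma set_dist_eqI:
  assumes "finite C" "z \<in> C" "d x z = t" "\<And>w. w \<in> C \<Longrightarrow> t \<le> d x w"
  shows "set_dist V E x C = t"
  unfolding set_dist_def using assms by (intro Min_eqI) auto

lemma set_distE:
  assumes "finite C" "C \<noteq> {}"
  obtains z where "z \<in> C" "d x z = set_dist V E x C" "\<And>w. w \<in> C \<Longrightarrow> set_dist V E x C \<le> d x w"
  using assms Min_in[of "d x ` C"] Min_le[of "d x ` C"] unfolding set_dist_def by fastforce

lemma gdist_clique_cases:
  assumes "is_clique V E C" "finite C" "x \<in> V" "w \<in> C"
  shows "d x w = set_dist V E x C \<or> d x w = set_dist V E x C + 1"
proof -
  obtain z where z: "z \<in> C" "d x z = set_dist V E x C" "\<And>w. w \<in> C \<Longrightarrow> set_dist V E x C \<le> d x w"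
    using set_distE[OF assms(2)] assms(4) by blast
  have "d x w \<le> d x z + 1"
    using gdist_adj_le[OF assms(3), of z w] assms(1,4) z(1)
    by (cases "w = z") (auto simp: is_clique_def)
  then show ?thesis
    using z(2) z(3)[of w] assms(4) by linarith
qed

lemma sum_neighbours_gdist:
  assumes "x \<in> V" "y \<in> V"
  shows "(\<Sum>z\<in>neighbours y. h (d x z)) =
      real (cnum V E x y) * h (d x y - 1)
    + (real (card (neighbours y)) - real (cnum V E x y) - real (bnum V E x y)) * h (d x y)
    + real (bnum V E x y) * h (d x y + 1)"
proof -
  define S1 where "S1 = {z \<in> V. E y z \<and> d x z + 1 = d x y}"
  define S2 where "S2 = {z \<in> V. E y z \<and> d x z = d x y}"
  define S3 where "S3 = {z \<in> V. E y z \<and> d x z = d x y + 1}"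
  have "neighbours y = S1 \<union> S2 \<union> S3"
  proof (rule set_eqI, rule iffI)
    fix z assume z: "z \<in> neighbours y"
    then have "d x z \<le> d x y + 1" "d x y \<le> d x z + 1"
      using gdist_adj_le[OF assms(1)] adj_sym by blast+
    then have "d x z + 1 = d x y \<or> d x z = d x y \<or> d x z = d x y + 1"
      by linarith
    then show "z \<in> S1 \<union> S2 \<union> S3"
      using z unfolding S1_def S2_def S3_def by blast
  qed (auto simp: S1_def S2_def S3_def)
  moreover have "finite S1" "finite S2" "finite S3" "S1 \<inter> S2 = {}" "(S1 \<union> S2) \<inter> S3 = {}"
    using finite_V by (auto simp: S1_def S2_def S3_def)
  ultimately have split: "(\<Sum>z\<in>neighbours y. g z) = sum g S1 + sum g S2 + sum g S3"
    for g :: "'a \<Rightarrow> real"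
    by (simp add: sum.union_disjoint)
  have "real (card (neighbours y)) = real (card S1) + real (card S2) + real (card S3)"
    using split[of "\<lambda>_. 1"] by simp
  moreover have "(\<Sum>z\<in>S1. h (d x z)) = (\<Sum>z\<in>S1. h (d x y - 1))"
    by (intro sum.cong) (auto simp: S1_def simp flip: add_implies_diff)
  then have "(\<Sum>z\<in>neighbours y. h (d x z)) =
      real (card S1) * h (d x y - 1) + real (card S2) * h (d x y) + real (card S3) * h (d x y + 1)"
    unfolding split by (simp add: S2_def S3_def)
  ultimately show ?thesis
    unfolding cnum_def bnum_def S1_def S3_def by simp
qed

end

section \<open>The smallest eigenvalue of a distance-regular graph\<close>

locale distance_regular_arrays = connected_simple_graph +
  fixes D :: nat and bi ci :: "nat \<Rightarrow> real"
  assumes diameter_eq: "diameter V E = D"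
    and bnum_eq: "x \<in> V \<Longrightarrow> y \<in> V \<Longrightarrow> real (bnum V E x y) = bi (d x y)"
    and cnum_eq: "x \<in> V \<Longrightarrow> y \<in> V \<Longrightarrow> real (cnum V E x y) = ci (d x y)"
begin

definition ai :: "nat \<Rightarrow> real" where
  "ai j = bi 0 - bi j - ci j"

lemma gdist_le_D: "x \<in> V \<Longrightarrow> y \<in> V \<Longrightarrow> d x y \<le> D"
  using gdist_le_diameter diameter_eq by simp

lemma card_neighbours: "x \<in> V \<Longrightarrow> real (card (neighbours x)) = bi 0"
  using bnum_eq[of x x] gdist_eq_1_iff[of x] unfolding bnum_def by (simp cong: conj_cong)

lemma valency_eq: "real (valency V E) = bi 0"
  using card_neighbours[of "SOME x. x \<in> V"] V_nonempty unfolding valency_def by (simp add: some_in_eq)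

lemma ci_0 [simp]: "ci 0 = 0"
proof -
  obtain x where "x \<in> V"
    using V_nonempty by blast
  then show ?thesis
    using cnum_eq[of x x] unfolding cnum_def by simp
qed

lemma ci_pos: "0 < j \<Longrightarrow> j \<le> D \<Longrightarrow> 0 < ci j"
proof -
  assume j: "0 < j" "j \<le> D"
  obtain x y where xy: "x \<in> V" "y \<in> V" "d x y = Suc (j - 1)"
    using all_gdists_from_some_vertex j diameter_eq by auto
  then obtain z where "E y z" "d x z = j - 1"
    using gdist_Suc_obtain by blast
  then have "z \<in> {z \<in> V. E y z \<and> d x z + 1 = d x y}"
    using xy adj_in_V by auto
  then have "0 < cnum V E x y"
    unfolding cnum_def using finite_V card_gt_0_iff by fastforce
  then show ?thesis
    using cnum_eq[OF xy(1,2)] xy(3) j(1) by simp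
qed

lemma bi_pos: "j < D \<Longrightarrow> 0 < bi j"
proof -
  assume j: "j < D"
  obtain x y where xy: "x \<in> V" "y \<in> V" "d x y = Suc j"
    using all_gdists_from_some_vertex j diameter_eq by (metis Suc_leI)
  then obtain z where z: "E y z" "d x z = j"
    using gdist_Suc_obtain by blast
  then have "y \<in> {w \<in> V. E z w \<and> d x w = d x z + 1}"
    using xy adj_in_V adj_sym by auto
  then have "0 < bnum V E x z"
    unfolding bnum_def using finite_V card_gt_0_iff by fastforce
  then show ?thesis
    using bnum_eq[of x z] xy(1) z adj_in_V by force
qed

lemma sum_neighbours_arrays:
  assumes "x \<in> V" "y \<in> V"
  shows "(\<Sum>z\<in>neighbours y. h (d x z)) =
    ci (d x y) * h (d x y - 1) + ai (d x y) * h (d x y) + bi (d x y) * h (d x y + 1)"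
  using sum_neighbours_gdist[OF assms] card_neighbours[OF assms(2)]
    bnum_eq[OF assms] cnum_eq[OF assms] by (simp add: ai_def)


definition standard_sequence :: "real \<Rightarrow> (nat \<Rightarrow> real) \<Rightarrow> bool" where
  "standard_sequence \<theta> u \<longleftrightarrow> u 0 = 1 \<and>
     (\<forall>j \<le> D. ci j * u (j - 1) + ai j * u j + bi j * u (j + 1) = \<theta> * u j)"

lemma standard_sequence_eigenvector:
  assumes "standard_sequence \<theta> u" "x \<in> V" "y \<in> V"
  shows "(\<Sum>z\<in>neighbours y. u (d x z)) = \<theta> * u (d x y)"
proof -
  have "ci (d x y) * u (d x y - 1) + ai (d x y) * u (d x y) + bi (d x y) * u (d x y + 1) = \<theta> * u (d x y)"
    using assms(1) gdist_le_D[OF assms(2,3)] unfolding standard_sequence_def by blast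
  then show ?thesis
    using sum_neighbours_arrays[OF assms(2,3), of u] by simp
qed

lemma standard_sequence_eigenvalue:
  assumes "standard_sequence \<theta> u"
  shows "adj_eigenvalue V E \<theta>"
proof -
  obtain x where x: "x \<in> V"
    using V_nonempty by blast
  have "u (d x x) \<noteq> 0"
    using assms unfolding standard_sequence_def by simp
  then show ?thesis
    unfolding adj_eigenvalue_def using x standard_sequence_eigenvector[OF assms x]
    by (intro exI[of _ "\<lambda>y. u (d x y)"] conjI bexI[of _ x]) auto
qed

definition sphere_sum :: "('a \<Rightarrow> real) \<Rightarrow> 'a \<Rightarrow> nat \<Rightarrow> real" where
  "sphere_sum f x j = (\<Sum>y\<in>{y \<in> V. d x y = j}. f y)"

lemma sphere_sum_0: "x \<in> V \<Longrightarrow> sphere_sum f x 0 = f x"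
proof -
  assume x: "x \<in> V"
  then have "{y \<in> V. d x y = 0} = {x}"
    using gdist_eq_0_iff by auto
  then show ?thesis
    unfolding sphere_sum_def by simp
qed

lemma sphere_sum_beyond_D: "x \<in> V \<Longrightarrow> D < j \<Longrightarrow> sphere_sum f x j = 0"
proof -
  assume "x \<in> V" "D < j"
  then have "{y \<in> V. d x y = j} = {}"
    using gdist_le_D by fastforce
  then show ?thesis
    unfolding sphere_sum_def by (metis sum.empty)
qed

lemma card_neighbours_in_sphere:
  assumes "x \<in> V" "z \<in> V"
  shows "real (card (neighbours z \<inter> {y \<in> V. d x y = j})) =
      (if d x z = j + 1 then ci (j + 1) else 0) + (if d x z = j then ai j else 0)
    + (if d x z + 1 = j then bi (j - 1) else 0)"
proof -
  have "real (card (neighbours z \<inter> {y \<in> V. d x y = j})) =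
      (\<Sum>w\<in>neighbours z. if d x w = j then 1 else 0)"
    using finite_V by (simp add: sum.If_cases Int_def conj_commute)
  also have "\<dots> = ci (d x z) * (if d x z - 1 = j then 1 else 0) + ai (d x z) * (if d x z = j then 1 else 0)
      + bi (d x z) * (if d x z + 1 = j then 1 else 0)"
    using sum_neighbours_arrays[OF assms, of "\<lambda>t. if t = j then 1 else 0"] .
  also have "\<dots> = (if d x z = j + 1 then ci (j + 1) else 0) + (if d x z = j then ai j else 0)
    + (if d x z + 1 = j then bi (j - 1) else 0)"
    by (cases "d x z") auto
  finally show ?thesis .
qed

lemma sphere_sum_recurrence:
  assumes eig: "\<And>y. y \<in> V \<Longrightarrow> (\<Sum>z\<in>neighbours y. f z) = \<theta> * f y" and x: "x \<in> V"
  shows "\<theta> * sphere_sum f x j = ci (j + 1) * sphere_sum f x (j + 1) + ai j * sphere_sum f x j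
    + (if j = 0 then 0 else bi (j - 1) * sphere_sum f x (j - 1))"
proof -
  have sphere: "(\<Sum>z\<in>V. if d x z = t then c * f z else 0) = c * sphere_sum f x t" for c t
    unfolding sphere_sum_def using finite_V by (simp add: sum.inter_filter[symmetric] sum_distrib_left)
  have inner: "(\<Sum>z\<in>V. if d x z + 1 = j then bi (j - 1) * f z else 0) =
      (if j = 0 then 0 else bi (j - 1) * sphere_sum f x (j - 1))"
    using sphere[of "j - 1" "bi (j - 1)"] by (cases j) simp_all
  have "\<theta> * sphere_sum f x j = (\<Sum>y\<in>{y \<in> V. d x y = j}. \<Sum>z\<in>neighbours y. f z)"
    unfolding sphere_sum_def sum_distrib_left by (simp add: eig)
  also have "\<dots> = (\<Sum>z\<in>V. f z * real (card (neighbours z \<inter> {y \<in> V. d x y = j})))"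
    by (rule sum_sum_neighbours_swap) auto
  also have "\<dots> = (\<Sum>z\<in>V. (if d x z = j + 1 then ci (j + 1) * f z else 0)
      + (if d x z = j then ai j * f z else 0) + (if d x z + 1 = j then bi (j - 1) * f z else 0))"
    by (intro sum.cong refl) (simp add: card_neighbours_in_sphere[OF x] distrib_left mult.commute)
  also have "\<dots> = ci (j + 1) * sphere_sum f x (j + 1) + ai j * sphere_sum f x j
      + (if j = 0 then 0 else bi (j - 1) * sphere_sum f x (j - 1))"
    unfolding sum.distrib sphere inner by simp
  finally show ?thesis .
qed


fun sphere_poly :: "nat \<Rightarrow> real poly" where
  "sphere_poly 0 = 1"
| "sphere_poly (Suc 0) = smult (1 / ci 1) [:- ai 0, 1:]"
| "sphere_poly (Suc (Suc j)) = smult (1 / ci (Suc (Suc j)))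
     ([:- ai (Suc j), 1:] * sphere_poly (Suc j) - smult (bi j) (sphere_poly j))"

definition eigen_poly :: "real poly" where
  "eigen_poly = [:- ai D, 1:] * sphere_poly D - smult (bi (D - 1)) (sphere_poly (D - 1))"

lemma poly_sphere_poly_Suc:
  assumes "Suc j \<le> D"
  shows "ci (Suc j) * poly (sphere_poly (Suc j)) \<theta> =
    (\<theta> - ai j) * poly (sphere_poly j) \<theta> - (if j = 0 then 0 else bi (j - 1) * poly (sphere_poly (j - 1)) \<theta>)"
proof (cases j)
  case 0
  then show ?thesis
    using ci_pos[of 1] assms by (simp add: field_simps)
next
  case (Suc i)
  then show ?thesis
    using ci_pos[of "Suc j"] assms by (simp add: algebra_simps)
qed

lemma sphere_sum_eq_poly:
  assumes eig: "\<And>y. y \<in> V \<Longrightarrow> (\<Sum>z\<in>neighbours y. f z) = \<theta> * f y" and x: "x \<in> V"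
  shows "j \<le> D \<Longrightarrow> sphere_sum f x j = f x * poly (sphere_poly j) \<theta>"
proof (induction j rule: less_induct)
  case (less j)
  show ?case
  proof (cases j)
    case 0
    then show ?thesis
      using sphere_sum_0[OF x] by simp
  next
    case (Suc i)
    have IH: "k \<le> i \<Longrightarrow> sphere_sum f x k = f x * poly (sphere_poly k) \<theta>" for k
      using less Suc by simp
    have "ci j * sphere_sum f x j = (\<theta> - ai i) * sphere_sum f x i
        - (if i = 0 then 0 else bi (i - 1) * sphere_sum f x (i - 1))"
      using sphere_sum_recurrence[OF eig x, of i] Suc by (simp add: algebra_simps)
    also have "\<dots> = f x * ((\<theta> - ai i) * poly (sphere_poly i) \<theta>
        - (if i = 0 then 0 else bi (i - 1) * poly (sphere_poly (i - 1)) \<theta>))"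
      using IH[of i] IH[of "i - 1"] by (simp add: algebra_simps)
    also have "\<dots> = f x * (ci j * poly (sphere_poly j) \<theta>)"
      using poly_sphere_poly_Suc[of i \<theta>] less.prems Suc by simp
    finally show ?thesis
      using ci_pos[of j] less.prems Suc by simp
  qed
qed

lemma eigenvalue_imp_root:
  assumes "0 < D" "adj_eigenvalue V E \<theta>"
  shows "poly eigen_poly \<theta> = 0"
proof -
  obtain f x where x: "x \<in> V" "f x \<noteq> 0"
    and eig: "\<And>y. y \<in> V \<Longrightarrow> (\<Sum>z\<in>neighbours y. f z) = \<theta> * f y"
    using assms(2) unfolding adj_eigenvalue_def by blast
  have "\<theta> * sphere_sum f x D = ai D * sphere_sum f x D + bi (D - 1) * sphere_sum f x (D - 1)"
    using sphere_sum_recurrence[OF eig x(1), of D] sphere_sum_beyond_D[OF x(1), of "D + 1"] assms(1)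
    by simp
  then have "f x * poly eigen_poly \<theta> = 0"
    using sphere_sum_eq_poly[OF eig x(1), of D] sphere_sum_eq_poly[OF eig x(1), of "D - 1"]
    unfolding eigen_poly_def by (simp add: algebra_simps)
  then show ?thesis
    using x(2) by simp
qed

lemma poly_sphere_poly_standard_sequence:
  assumes u: "standard_sequence \<theta> u" and x: "x \<in> V" and j: "j \<le> D"
  shows "poly (sphere_poly j) \<theta> = real (card {y \<in> V. d x y = j}) * u j"
proof -
  have "sphere_sum (\<lambda>y. u (d x y)) x j = real (card {y \<in> V. d x y = j}) * u j"
    unfolding sphere_sum_def by simp
  moreover have "u (d x x) = 1"
    using u unfolding standard_sequence_def by simp
  ultimately show ?thesis
    using sphere_sum_eq_poly[OF standard_sequence_eigenvector[OF u x] x j] by simp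
qed

lemma sphere_poly_alternating:
  assumes u: "standard_sequence \<theta> u" and alt: "\<And>j. j < D \<Longrightarrow> u j * u (Suc j) < 0"
    and j: "j < D"
  shows "poly (sphere_poly j) \<theta> * poly (sphere_poly (Suc j)) \<theta> < 0"
proof -
  obtain x where x: "x \<in> V" and spheres: "\<And>i. i \<le> D \<Longrightarrow> \<exists>y\<in>V. d x y = i"
    using all_gdists_from_some_vertex diameter_eq by auto
  have "0 < card {y \<in> V. d x y = i}" if "i \<le> D" for i
    using spheres[OF that] finite_V card_gt_0_iff by fastforce
  then have "0 < real (card {y \<in> V. d x y = j}) * real (card {y \<in> V. d x y = Suc j})"
    using j by simp
  moreover have "poly (sphere_poly j) \<theta> * poly (sphere_poly (Suc j)) \<theta> =
      (u j * u (Suc j)) * (real (card {y \<in> V. d x y = j}) * real (card {y \<in> V. d x y = Suc j}))"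
    using poly_sphere_poly_standard_sequence[OF u x] j by simp
  ultimately show ?thesis
    using mult_neg_pos[OF alt[OF j]] by simp
qed

definition sphere_ratio :: "real \<Rightarrow> nat \<Rightarrow> real" where
  "sphere_ratio \<theta> j = poly (sphere_poly (Suc j)) \<theta> / poly (sphere_poly j) \<theta>"

lemma sphere_ratio_0: "0 < D \<Longrightarrow> sphere_ratio \<theta> 0 = (\<theta> - ai 0) / ci 1"
  unfolding sphere_ratio_def by (simp add: diff_divide_distrib)

(* Nothing is assumed about sphere_poly j: if it vanishes, both sides read x / 0 = 0. *)
lemma sphere_ratio_Suc:
  assumes "Suc (Suc j) \<le> D" "poly (sphere_poly (Suc j)) \<theta> \<noteq> 0"
  shows "ci (Suc (Suc j)) * sphere_ratio \<theta> (Suc j) = \<theta> - ai (Suc j) - bi j / sphere_ratio \<theta> j"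
proof -
  have "ci (Suc (Suc j)) * sphere_ratio \<theta> (Suc j) =
      ((\<theta> - ai (Suc j)) * poly (sphere_poly (Suc j)) \<theta> - bi j * poly (sphere_poly j) \<theta>)
      / poly (sphere_poly (Suc j)) \<theta>"
  proof -
    have "ci (Suc (Suc j)) * poly (sphere_poly (Suc (Suc j))) \<theta> =
        (\<theta> - ai (Suc j)) * poly (sphere_poly (Suc j)) \<theta> - bi j * poly (sphere_poly j) \<theta>"
      using poly_sphere_poly_Suc[OF assms(1), of \<theta>] by simp
    then show ?thesis
      unfolding sphere_ratio_def by (metis times_divide_eq_right)
  qed
  also have "\<dots> = \<theta> - ai (Suc j) - bi j * poly (sphere_poly j) \<theta> / poly (sphere_poly (Suc j)) \<theta>"
    using assms(2) by (simp add: field_simps)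
  finally show ?thesis
    unfolding sphere_ratio_def by simp
qed

lemma sphere_ratio_below:
  assumes alt: "\<And>j. j < D \<Longrightarrow> poly (sphere_poly j) \<theta>\<^sub>0 * poly (sphere_poly (Suc j)) \<theta>\<^sub>0 < 0"
    and "\<theta> < \<theta>\<^sub>0"
  shows "j < D \<Longrightarrow> poly (sphere_poly j) \<theta> \<noteq> 0 \<and> sphere_ratio \<theta> j < sphere_ratio \<theta>\<^sub>0 j"
proof (induction j)
  case 0
  then show ?case
    using ci_pos[of 1] assms(2) by (simp add: sphere_ratio_0 divide_strict_right_mono)
next
  case (Suc j)
  then have IH: "poly (sphere_poly j) \<theta> \<noteq> 0" "sphere_ratio \<theta> j < sphere_ratio \<theta>\<^sub>0 j"
    by simp_all
  have neg0: "sphere_ratio \<theta>\<^sub>0 j < 0"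
    using alt[of j] Suc.prems unfolding sphere_ratio_def by (auto simp: divide_less_0_iff mult_less_0_iff)
  have nz0: "poly (sphere_poly (Suc j)) \<theta>\<^sub>0 \<noteq> 0"
    using alt[of j] Suc.prems by auto
  have nz: "poly (sphere_poly (Suc j)) \<theta> \<noteq> 0"
    using IH neg0 unfolding sphere_ratio_def by auto
  have "inverse (sphere_ratio \<theta>\<^sub>0 j) < inverse (sphere_ratio \<theta> j)"
    using less_imp_inverse_less_neg[OF IH(2) neg0] .
  then have "bi j / sphere_ratio \<theta>\<^sub>0 j < bi j / sphere_ratio \<theta> j"
    using bi_pos[of j] Suc.prems by (simp add: divide_inverse)
  then have "ci (Suc (Suc j)) * sphere_ratio \<theta> (Suc j) < ci (Suc (Suc j)) * sphere_ratio \<theta>\<^sub>0 (Suc j)"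
    using sphere_ratio_Suc[of j \<theta>] sphere_ratio_Suc[of j \<theta>\<^sub>0] Suc.prems nz nz0 assms(2) by simp
  then show ?case
    using ci_pos[of "Suc (Suc j)"] Suc.prems nz by simp
qed

lemma eigen_poly_nonzero_below:
  assumes D: "0 < D"
    and alt: "\<And>j. j < D \<Longrightarrow> poly (sphere_poly j) \<theta>\<^sub>0 * poly (sphere_poly (Suc j)) \<theta>\<^sub>0 < 0"
    and root: "poly eigen_poly \<theta>\<^sub>0 = 0" and below: "\<theta> < \<theta>\<^sub>0"
  shows "poly eigen_poly \<theta> \<noteq> 0"
proof -
  obtain k where k: "D = Suc k"
    using D by (cases D) auto
  have factor: "poly eigen_poly t = poly (sphere_poly k) t * (sphere_ratio t k * (t - ai D) - bi k)"
    if "poly (sphere_poly k) t \<noteq> 0" for t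
    using that k unfolding eigen_poly_def sphere_ratio_def by (simp add: field_simps)
  have nz0: "poly (sphere_poly k) \<theta>\<^sub>0 \<noteq> 0" and neg0: "sphere_ratio \<theta>\<^sub>0 k < 0"
    using alt[of k] k unfolding sphere_ratio_def by (auto simp: divide_less_0_iff mult_less_0_iff)
  have eq0: "sphere_ratio \<theta>\<^sub>0 k * (\<theta>\<^sub>0 - ai D) = bi k"
    using root factor[OF nz0] nz0 by simp
  then have "\<theta>\<^sub>0 - ai D < 0"
    using bi_pos[of k] k neg0 zero_less_mult_iff[of "sphere_ratio \<theta>\<^sub>0 k" "\<theta>\<^sub>0 - ai D"] by simp
  moreover obtain nz: "poly (sphere_poly k) \<theta> \<noteq> 0" and "sphere_ratio \<theta> k < sphere_ratio \<theta>\<^sub>0 k"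
    using sphere_ratio_below[OF alt below, of k] k by auto
  ultimately have "- sphere_ratio \<theta>\<^sub>0 k * (ai D - \<theta>\<^sub>0) < - sphere_ratio \<theta> k * (ai D - \<theta>)"
    using neg0 below by (intro mult_strict_mono) auto
  then have "bi k < sphere_ratio \<theta> k * (\<theta> - ai D)"
    using eq0 by (simp add: algebra_simps)
  then show ?thesis
    using factor[OF nz] nz by simp
qed

lemma min_eigenvalue_eqI:
  assumes D: "0 < D" and u: "standard_sequence \<theta>\<^sub>0 u" and alt: "\<And>j. j < D \<Longrightarrow> u j * u (Suc j) < 0"
  shows "min_eigenvalue V E = \<theta>\<^sub>0"
proof -
  have eig0: "adj_eigenvalue V E \<theta>\<^sub>0"
    using standard_sequence_eigenvalue[OF u] .
  have below: "poly eigen_poly \<theta> \<noteq> 0" if "\<theta> < \<theta>\<^sub>0" for \<theta>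
    using eigen_poly_nonzero_below[OF D sphere_poly_alternating[OF u alt]
        eigenvalue_imp_root[OF D eig0] that] .
  then have "eigen_poly \<noteq> 0"
    by (metis lt_ex poly_0)
  then have "finite {\<theta>. poly eigen_poly \<theta> = 0}"
    by (rule poly_roots_finite)
  then have fin: "finite {\<theta>. adj_eigenvalue V E \<theta>}"
    using eigenvalue_imp_root[OF D] by (auto elim: finite_subset[rotated])
  show ?thesis
    unfolding min_eigenvalue_def using eig0 below eigenvalue_imp_root[OF D]
    by (intro Min_eqI[OF fin]) force+
qed

end

section \<open>Partitions of the edge set into cliques\<close>

locale clique_partition = fin_simple_graph +
  fixes \<C> :: "'a set set"
  assumes clique: "C \<in> \<C> \<Longrightarrow> is_clique V E C"
    and unique_clique: "E x y \<Longrightarrow> \<exists>!C. C \<in> \<C> \<and> x \<in> C \<and> y \<in> C"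
begin

lemma clique_subset: "C \<in> \<C> \<Longrightarrow> C \<subseteq> V"
  and clique_adj: "C \<in> \<C> \<Longrightarrow> x \<in> C \<Longrightarrow> y \<in> C \<Longrightarrow> x \<noteq> y \<Longrightarrow> E x y"
  using clique by (auto simp: is_clique_def)

lemma finite_clique: "C \<in> \<C> \<Longrightarrow> finite C"
  using clique_subset finite_V finite_subset by blast

lemma finite_cliques: "finite \<C>"
  using clique_subset finite_V by (meson Pow_iff finite_Pow_iff finite_subset subsetI)

lemma clique_eqI: "C \<in> \<C> \<Longrightarrow> C' \<in> \<C> \<Longrightarrow> x \<in> C \<inter> C' \<Longrightarrow> y \<in> C \<inter> C' \<Longrightarrow> x \<noteq> y \<Longrightarrow> C = C'"
  using unique_clique clique_adj by blast

lemma sum_neighbours_cliques: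
  assumes "y \<in> V"
  shows "(\<Sum>z\<in>neighbours y. h z) = (\<Sum>C\<in>{C \<in> \<C>. y \<in> C}. \<Sum>z\<in>C - {y}. h z)"
proof -
  have "neighbours y = (\<Union>C\<in>{C \<in> \<C>. y \<in> C}. C - {y})"
    using unique_clique clique_adj clique_subset adj_irrefl assms by fast
  moreover have "(\<Sum>z\<in>(\<Union>C\<in>{C \<in> \<C>. y \<in> C}. C - {y}). h z) = (\<Sum>C\<in>{C \<in> \<C>. y \<in> C}. \<Sum>z\<in>C - {y}. h z)"
    using finite_cliques finite_clique by (intro sum.UNION_disjoint) (auto dest: clique_eqI)
  ultimately show ?thesis
    by simp
qed

lemma card_cliques_through:
  assumes size: "\<And>C. C \<in> \<C> \<Longrightarrow> real (card C) = 1 + s" and y: "y \<in> V"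
  shows "real (card {C \<in> \<C>. y \<in> C}) * s = real (card (neighbours y))"
proof -
  have "real (card (neighbours y)) = (\<Sum>C\<in>{C \<in> \<C>. y \<in> C}. real (card (C - {y})))"
    using sum_neighbours_cliques[OF y, of "\<lambda>_. 1::real"] by simp
  also have "\<dots> = (\<Sum>C\<in>{C \<in> \<C>. y \<in> C}. s)"
  proof (intro sum.cong refl)
    fix C assume "C \<in> {C \<in> \<C>. y \<in> C}"
    then have "C \<in> \<C>" "y \<in> C" "0 < card C"
      using finite_clique card_gt_0_iff by blast+
    then show "real (card (C - {y})) = s"
      using size by (simp add: of_nat_diff)
  qed
  finally show ?thesis
    by simp
qed

lemma sum_squared_clique_sums:
  "(\<Sum>C\<in>\<C>. (\<Sum>y\<in>C. g y)\<^sup>2) =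
    (\<Sum>y\<in>V. g y * (real (card {C \<in> \<C>. y \<in> C}) * g y + (\<Sum>z\<in>neighbours y. g z)))"
proof -
  have "(\<Sum>y\<in>C. g y)\<^sup>2 = (\<Sum>y\<in>{y \<in> V. y \<in> C}. g y * (g y + (\<Sum>z\<in>C - {y}. g z)))" if "C \<in> \<C>" for C
  proof -
    have "{y \<in> V. y \<in> C} = C"
      using clique_subset[OF that] by blast
    moreover have "(\<Sum>z\<in>C. g z) = g y + (\<Sum>z\<in>C - {y}. g z)" if "y \<in> C" for y
      using finite_clique[OF \<open>C \<in> \<C>\<close>] that by (simp add: sum.remove)
    ultimately show ?thesis
      by (simp add: power2_eq_square sum_distrib_right mult.commute)
  qed
  then have "(\<Sum>C\<in>\<C>. (\<Sum>y\<in>C. g y)\<^sup>2) =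
      (\<Sum>C\<in>\<C>. \<Sum>y\<in>{y \<in> V. y \<in> C}. g y * (g y + (\<Sum>z\<in>C - {y}. g z)))"
    by simp
  also have "\<dots> = (\<Sum>y\<in>V. \<Sum>C\<in>{C \<in> \<C>. y \<in> C}. g y * (g y + (\<Sum>z\<in>C - {y}. g z)))"
    by (rule sum.swap_restrict[OF finite_cliques finite_V])
  also have "\<dots> = (\<Sum>y\<in>V. g y * (real (card {C \<in> \<C>. y \<in> C}) * g y + (\<Sum>z\<in>neighbours y. g z)))"
    by (intro sum.cong refl)
      (simp add: sum_neighbours_cliques sum.distrib flip: sum_distrib_left distrib_left)
  finally show ?thesis .
qed

lemma clique_sums_eq_0:
  assumes m: "\<And>y. y \<in> V \<Longrightarrow> real (card {C \<in> \<C>. y \<in> C}) = m"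
    and eig: "\<And>y. y \<in> V \<Longrightarrow> (\<Sum>z\<in>neighbours y. g z) = - m * g y"
    and C: "C \<in> \<C>"
  shows "(\<Sum>y\<in>C. g y) = 0"
proof -
  have "(\<Sum>C\<in>\<C>. (\<Sum>y\<in>C. g y)\<^sup>2) = 0"
    unfolding sum_squared_clique_sums by (simp add: m eig)
  then show ?thesis
    using sum_nonneg_eq_0_iff[OF finite_cliques, of "\<lambda>C. (\<Sum>y\<in>C. g y)\<^sup>2"] C by simp
qed

end

section \<open>Classical parameters\<close>

lemma qbr_0 [simp]: "qbr b 0 = 0"
  by (simp add: qbr_def)

lemma qbr_Suc: "b \<noteq> 1 \<Longrightarrow> qbr b (Suc j) = qbr b j + of_int b ^ j"
  by (simp add: qbr_def field_simps)

lemma qbr_strict_mono: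
  assumes "1 < b" and "i < j"
  shows "qbr b i < qbr b j"
  using assms(2)
proof (induction j)
  case (Suc j)
  have "qbr b j < qbr b (Suc j)"
    using assms(1) qbr_Suc[of b j] by simp
  with Suc show ?case
    by (cases "i = j") auto
qed simp

lemma qbr_pos: "1 < b \<Longrightarrow> 0 < j \<Longrightarrow> 0 < qbr b j"
  using qbr_strict_mono[of b 0 j] by simp

locale classical_parameters_graph =
  fixes V :: "'a set" and E :: "'a \<Rightarrow> 'a \<Rightarrow> bool" and D :: nat and b :: int and \<alpha> \<beta> :: real
  assumes classical: "classical_parameters V E D b \<alpha> \<beta>"
    and b_gt_1: "1 < b" and D_pos: "0 < D"
begin

definition b_classical :: "nat \<Rightarrow> real" where
  "b_classical i = (qbr b D - qbr b i) * (\<beta> - \<alpha> * qbr b i)"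

definition c_classical :: "nat \<Rightarrow> real" where
  "c_classical i = qbr b i * (1 + \<alpha> * qbr b (i - 1))"

end

sublocale classical_parameters_graph \<subseteq> connected_simple_graph V E
  using classical unfolding classical_parameters_def distance_regular_def by unfold_locales auto

sublocale classical_parameters_graph \<subseteq> distance_regular_arrays V E D b_classical c_classical
proof unfold_locales
  show "diameter V E = D"
    using classical unfolding classical_parameters_def by simp
  then have "d x y \<le> D" if "x \<in> V" "y \<in> V" for x y
    using gdist_le_diameter that by simp
  then show "real (bnum V E x y) = b_classical (d x y)" "real (cnum V E x y) = c_classical (d x y)"
    if "x \<in> V" "y \<in> V" for x y
    using classical that unfolding classical_parameters_def b_classical_def c_classical_def Let_def
    by auto
qed

context classical_parameters_graph
begin

lemma one_plus_alpha_qbr_pos: "j < D \<Longrightarrow> 0 < 1 + \<alpha> * qbr b j"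
  using ci_pos[of "Suc j"] qbr_pos[OF b_gt_1, of "Suc j"]
  unfolding c_classical_def by (simp add: zero_less_mult_iff)

lemma beta_minus_alpha_qbr_pos: "j < D \<Longrightarrow> 0 < \<beta> - \<alpha> * qbr b j"
  using bi_pos[of j] qbr_strict_mono[OF b_gt_1, of j D]
  unfolding b_classical_def by (simp add: zero_less_mult_iff)

lemma beta_pos: "0 < \<beta>"
  using beta_minus_alpha_qbr_pos[OF D_pos] by simp

lemma valency_classical: "real (valency V E) = qbr b D * \<beta>"
  using valency_eq by (simp add: b_classical_def)

definition rho :: "nat \<Rightarrow> real" where
  "rho j = - (1 + \<alpha> * qbr b j) / (\<beta> - \<alpha> * qbr b j)"

definition std_seq :: "nat \<Rightarrow> real" where
  "std_seq j = (\<Prod>i<j. rho i)"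

lemma rho_neg: "j < D \<Longrightarrow> rho j < 0"
  using divide_pos_pos[OF one_plus_alpha_qbr_pos beta_minus_alpha_qbr_pos] unfolding rho_def
  by (metis minus_divide_left neg_less_0_iff_less)

lemma b_classical_rho: "j \<le> D \<Longrightarrow> b_classical j * (rho j - 1) = - (qbr b D - qbr b j) * (1 + \<beta>)"
proof (cases "j = D")
  case False
  moreover assume "j \<le> D"
  ultimately have "\<beta> - \<alpha> * qbr b j \<noteq> 0"
    using beta_minus_alpha_qbr_pos[of j] by simp
  then show ?thesis
    unfolding b_classical_def rho_def by (simp add: field_simps)
qed (simp add: b_classical_def)

lemma c_classical_rho: "i < D \<Longrightarrow> c_classical (Suc i) * (1 - rho i) = - qbr b (Suc i) * (1 + \<beta>) * rho i"
  using beta_minus_alpha_qbr_pos[of i] unfolding c_classical_def rho_def by (simp add: field_simps)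

lemma std_seq_recurrence:
  assumes "j \<le> D"
  shows "c_classical j * std_seq (j - 1) + ai j * std_seq j + b_classical j * std_seq (j + 1)
    = - qbr b D * std_seq j"
proof (cases j)
  case 0
  then show ?thesis
    using b_classical_rho[of 0] by (simp add: std_seq_def ai_def c_classical_def b_classical_def algebra_simps)
next
  case (Suc i)
  have seq: "std_seq j = std_seq i * rho i" "std_seq (j - 1) = std_seq i"
    "std_seq (j + 1) = std_seq i * rho i * rho j"
    using Suc by (simp_all add: std_seq_def)
  have b_rho: "b_classical j * (rho j - 1) = - (qbr b D - qbr b j) * (1 + \<beta>)"
    using b_classical_rho[OF assms] .
  have c_rho: "c_classical j * (1 - rho i) = - qbr b j * (1 + \<beta>) * rho i"
    using c_classical_rho[of i] assms Suc by simp
  have "c_classical j * (1 - rho i) + rho i * (b_classical j * (rho j - 1))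
      + qbr b D * (1 + \<beta>) * rho i = 0"
    unfolding b_rho c_rho by (simp add: algebra_simps)
  moreover have "c_classical j * std_seq (j - 1) + ai j * std_seq j + b_classical j * std_seq (j + 1)
      + qbr b D * std_seq j = std_seq i *
      (c_classical j * (1 - rho i) + rho i * (b_classical j * (rho j - 1)) + qbr b D * (1 + \<beta>) * rho i)"
    unfolding seq ai_def by (simp add: b_classical_def algebra_simps)
  ultimately show ?thesis
    by simp
qed

lemma standard_sequence_std_seq: "standard_sequence (- qbr b D) std_seq"
  unfolding standard_sequence_def using std_seq_recurrence by (simp add: std_seq_def)

lemma std_seq_nonzero: "j \<le> D \<Longrightarrow> std_seq j \<noteq> 0"
proof -
  assume "j \<le> D"
  then have "rho i \<noteq> 0" if "i < j" for i
    using rho_neg[of i] that by simp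
  then show ?thesis
    by (simp add: std_seq_def)
qed

lemma std_seq_alternating: "j < D \<Longrightarrow> std_seq j * std_seq (Suc j) < 0"
proof -
  assume j: "j < D"
  have "0 < std_seq j * std_seq j"
    using std_seq_nonzero[of j] j by (simp flip: power2_eq_square)
  moreover have "std_seq j * std_seq (Suc j) = (std_seq j * std_seq j) * rho j"
    by (simp add: std_seq_def)
  ultimately show ?thesis
    using mult_pos_neg[OF _ rho_neg[OF j]] by metis
qed

lemma min_eigenvalue_classical: "min_eigenvalue V E = - qbr b D"
  using min_eigenvalue_eqI[OF D_pos standard_sequence_std_seq std_seq_alternating] .

end

section \<open>Geometric graphs with classical parameters\<close>

locale geometric_classical = classical_parameters_graph +
  fixes \<C> :: "'a set set"
  assumes geometric: "geometric_wrt V E \<C>"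

sublocale geometric_classical \<subseteq> clique_partition V E \<C>
  using geometric unfolding geometric_wrt_def delsarte_clique_def by unfold_locales auto

context geometric_classical
begin

lemma card_clique: "C \<in> \<C> \<Longrightarrow> real (card C) = 1 + \<beta>"
  using geometric qbr_pos[OF b_gt_1 D_pos]
  unfolding geometric_wrt_def delsarte_clique_def valency_classical min_eigenvalue_classical
  by auto

lemma card_cliques_through_vertex: "y \<in> V \<Longrightarrow> real (card {C \<in> \<C>. y \<in> C}) = qbr b D"
  using card_cliques_through[OF card_clique] card_neighbours beta_pos
  by (simp add: b_classical_def)

lemma clique_sum_std_seq: "x \<in> V \<Longrightarrow> C \<in> \<C> \<Longrightarrow> (\<Sum>y\<in>C. std_seq (d x y)) = 0"
  using clique_sums_eq_0[OF card_cliques_through_vertex]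
    standard_sequence_eigenvector[OF standard_sequence_std_seq] by simp

lemma card_clique_nearest:
  assumes x: "x \<in> V" and C: "C \<in> \<C>" and dist: "set_dist V E x C = j" and j: "j < D"
  shows "real (card {y \<in> C. d x y = j}) = 1 + \<alpha> * qbr b j"
proof -
  define A where "A = {y \<in> C. d x y = j}"
  have fin: "finite C" "A \<subseteq> C"
    using finite_clique[OF C] unfolding A_def by auto
  have far: "d x y = j + 1" if "y \<in> C - A" for y
    using gdist_clique_cases[OF clique[OF C] fin(1) x] that dist unfolding A_def by auto
  have card_far: "real (card (C - A)) = 1 + \<beta> - real (card A)"
    using card_clique[OF C] fin card_mono[OF fin] by (simp add: card_Diff_subset finite_subset of_nat_diff)
  have "0 = (\<Sum>y\<in>C. std_seq (d x y))"
    using clique_sum_std_seq[OF x C] by simp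
  also have "\<dots> = (\<Sum>y\<in>A. std_seq (d x y)) + (\<Sum>y\<in>C - A. std_seq (d x y))"
    using sum.subset_diff[OF fin(2,1)] by (simp add: add.commute)
  also have "\<dots> = (\<Sum>y\<in>A. std_seq j) + (\<Sum>y\<in>C - A. std_seq (j + 1))"
    using far by (intro arg_cong2[where f = "(+)"] sum.cong) (auto simp: A_def)
  also have "\<dots> = real (card A) * std_seq j + real (card (C - A)) * std_seq (j + 1)"
    by simp
  also have "\<dots> = std_seq j * (real (card A) + (1 + \<beta> - real (card A)) * rho j)"
    unfolding card_far by (simp add: std_seq_def algebra_simps)
  finally have "real (card A) + (1 + \<beta> - real (card A)) * rho j = 0"
    using std_seq_nonzero[of j] j by simp
  then have "real (card A) * (\<beta> - \<alpha> * qbr b j) - (1 + \<beta> - real (card A)) * (1 + \<alpha> * qbr b j) = 0"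
    using beta_minus_alpha_qbr_pos[OF j] unfolding rho_def by (simp add: field_simps)
  then have "(1 + \<beta>) * (real (card A) - (1 + \<alpha> * qbr b j)) = 0"
    by (simp add: algebra_simps)
  then show ?thesis
    using beta_pos unfolding A_def by simp
qed

lemma lower_neighbours_eq_UN_cliques:
  assumes x: "x \<in> V" and y: "y \<in> V" and dist: "d y x = Suc i"
  shows "{z \<in> V. E x z \<and> d y z + 1 = d y x} =
    (\<Union>C\<in>{C \<in> \<C>. x \<in> C \<and> set_dist V E y C = i}. {z \<in> C. d y z = i})"
proof (intro equalityI subsetI)
  fix z assume "z \<in> {z \<in> V. E x z \<and> d y z + 1 = d y x}"
  then have z: "E x z" "d y z = i"
    using dist by auto
  then obtain C where C: "C \<in> \<C>" "x \<in> C" "z \<in> C"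
    using unique_clique by blast
  have "i \<le> d y w" if "w \<in> C" for w
  proof (cases "w = x")
    case False
    then have "E x w"
      using clique_adj C that by blast
    then show ?thesis
      using gdist_adj_le[OF y adj_sym] dist by fastforce
  qed (use dist in simp)
  then have "set_dist V E y C = i"
    using set_dist_eqI[OF finite_clique[OF C(1)] C(3) z(2)] by blast
  then show "z \<in> (\<Union>C\<in>{C \<in> \<C>. x \<in> C \<and> set_dist V E y C = i}. {z \<in> C. d y z = i})"
    using C z by blast
next
  fix z assume "z \<in> (\<Union>C\<in>{C \<in> \<C>. x \<in> C \<and> set_dist V E y C = i}. {z \<in> C. d y z = i})"
  then obtain C where C: "C \<in> \<C>" "x \<in> C" "z \<in> C" "d y z = i"
    by blast
  then have "E x z"
    using clique_adj dist by fastforce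
  then show "z \<in> {z \<in> V. E x z \<and> d y z + 1 = d y x}"
    using C(4) dist adj_in_V by simp
qed

lemma card_cliques_towards:
  assumes x: "x \<in> V" and y: "y \<in> V" and dist: "d x y = Suc i" and i: "i < D"
  shows "real (card {C \<in> \<C>. x \<in> C \<and> set_dist V E y C = i}) = qbr b (Suc i)"
proof -
  define T where "T = {C \<in> \<C>. x \<in> C \<and> set_dist V E y C = i}"
  have dist': "d y x = Suc i"
    using dist gdist_sym x y by simp
  have disjoint: "{z \<in> C. d y z = i} \<inter> {z \<in> C'. d y z = i} = {}" if "C \<in> T" "C' \<in> T" "C \<noteq> C'" for C C'
    using that clique_eqI dist' unfolding T_def by fastforce
  have "c_classical (Suc i) = real (card (\<Union>C\<in>T. {z \<in> C. d y z = i}))"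
    using cnum_eq[OF y x] dist' lower_neighbours_eq_UN_cliques[OF x y dist']
    unfolding cnum_def T_def by simp
  also have "\<dots> = (\<Sum>C\<in>T. real (card {z \<in> C. d y z = i}))"
    using finite_cliques finite_clique disjoint unfolding T_def by (simp add: card_UN_disjoint)
  also have "\<dots> = real (card T) * (1 + \<alpha> * qbr b i)"
    using card_clique_nearest[OF y _ _ i] unfolding T_def by simp
  finally show ?thesis
    using one_plus_alpha_qbr_pos[OF i] unfolding T_def c_classical_def by simp
qed

end

theorem lemma16:
  fixes V :: "'a set" and E :: "'a \<Rightarrow> 'a \<Rightarrow> bool" and \<C> :: "'a set set"
    and D :: nat and b :: int and \<alpha> \<beta> :: real
  assumes "classical_parameters V E D b \<alpha> \<beta>"
    and "b \<ge> 2" and "D \<ge> 3"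
    and "geometric_wrt V E \<C>"
  shows "(\<forall>j < D. \<forall>C\<in>\<C>. \<forall>x\<in>V. set_dist V E x C = j \<longrightarrow>
            real (card {y \<in> C. gdist V E x y = j}) = 1 + \<alpha> * qbr b j)
       \<and> (\<forall>j \<in> {1..D}. \<forall>x\<in>V. \<forall>y\<in>V. gdist V E x y = j \<longrightarrow>
            real (card {C \<in> \<C>. x \<in> C \<and> set_dist V E y C = j - 1}) = qbr b j)"
proof -
  interpret geometric_classical V E D b \<alpha> \<beta> \<C>
    using assms by unfold_locales auto
  show ?thesis
  proof (intro conjI ballI allI impI)
    fix j C x
    assume "j < D" "C \<in> \<C>" "x \<in> V" "set_dist V E x C = j"
    then show "real (card {y \<in> C. gdist V E x y = j}) = 1 + \<alpha> * qbr b j"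
      using card_clique_nearest by blast
  next
    fix j x y
    assume "j \<in> {1..D}" "x \<in> V" "y \<in> V" "gdist V E x y = j"
    moreover have "j = Suc (j - 1)" "j - 1 < D"
      using \<open>j \<in> {1..D}\<close> by auto
    ultimately show "real (card {C \<in> \<C>. x \<in> C \<and> set_dist V E y C = j - 1}) = qbr b j"
      using card_cliques_towards[of x y "j - 1"] by simp
  qed
qed

end
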